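(* Let $N, K \geq 2$ be integers, let $N_0>0$, $P>0$, $T>0$, and fix an index $i \in \{1,\ldots,K\}$. Let $\mathbf{s}_k \in \mathbb{C}^N$ for $k \neq i$ be given and fixed, and consider $$\operatorname{SINR}(\mathbf{s}_i)_i = \left\{ \frac{1}{6N^2}\sum_{k=1, k\neq i}^K \sum_{m=1}^N S_m^{i,k} + \frac{N_0}{2PT}\right\}^{-1/2}$$ as a function of $\mathbf{s}_i \in \mathbb{C}^N$ subject to $\|\mathbf{s}_i\|^2 = N$. Let $\lambda^{(i)}_{\min}\ (\geq 0)$ be the minimum eigenvalue of the positive semidefinite Hermitian matrix $$\Sigma_i = \sum_{k=1, k \neq i}^K \sum_{m=1}^N \left[(\mathbf{s}_k^* Q_m \mathbf{s}_k) Q_m + (\mathbf{s}_k^* \hat{Q}_m \mathbf{s}_k)\hat{Q}_m\right],$$ and let $\mathbf{u}_i$ be a corresponding eigenvector with $\|\mathbf{u}_i\|=1$. Then $\mathbf{s}_i^\star = \sqrt{N}\,\mathbf{u}_i$ maximizes $\operatorname{SINR}(\mathbf{s}_i)_i$ over all $\mathbf{s}_i\in\mathbb{C}^N$ with $\|\mathbf{s}_i\|^2=N$, and the maximum value is $$\operatorname{SINR}_i^\star = \operatorname{SINR}(\mathbf{s}_i^\star)_i = \left\{\frac{\lambda^{(i)}_{\min}}{6N} + \frac{N_0}{2PT}\right\}^{-1/2}.$$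
   Context: Indices run over $1,\ldots,N$; $j$ is the imaginary unit and $\mathbf{z}^*$ denotes conjugate transpose. $V$ and $\hat V$ are the $N\times N$ unitary matrices with entries $V_{m,n} = \frac{1}{\sqrt N}\exp(-2\pi j \frac{mn}{N})$ and $\hat V_{m,n} = \frac{1}{\sqrt N}\exp\!\left(-2\pi j n(\frac{m}{N} + \frac{1}{2N})\right)$. For $m=1,\ldots,N$, $C_m$ (resp. $\hat C_m$) is the $N\times N$ diagonal matrix whose only nonzero entry is the $(m,m)$ entry, equal to $\sqrt{1+\frac12\cos(2\pi \frac mN)}$ (resp. $\sqrt{1+\frac12\cos(2\pi(\frac mN+\frac1{2N}))}$). Set $Q_m = V^* C_m V$ and $\hat Q_m = \hat V^* \hat C_m \hat V$. For sequences $\mathbf{s}_i,\mathbf{s}_k\in\mathbb{C}^N$, $S_m^{i,k} = (\mathbf{s}_i^* Q_m \mathbf{s}_i)(\mathbf{s}_k^* Q_m \mathbf{s}_k) + (\mathbf{s}_i^* \hat Q_m \mathbf{s}_i)(\mathbf{s}_k^* \hat Q_m \mathbf{s}_k)$. (This SINR models user $i$ of a $K$-user asynchronous BPSK CDMA system with spreading sequences $\mathbf{s}_k$ of length $N$, signal power $P$, symbol duration $T$ and noise spectral density $N_0/2$.) *)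

theory Defs
  imports Complex_Main
begin

text \<open>Vectors in C^N are functions nat => complex, indexed by 1..N;
  N x N matrices are functions nat => nat => complex, indexed by 1..N.\<close>

definition mmult :: "nat \<Rightarrow> (nat \<Rightarrow> nat \<Rightarrow> complex) \<Rightarrow> (nat \<Rightarrow> nat \<Rightarrow> complex) \<Rightarrow> nat \<Rightarrow> nat \<Rightarrow> complex" where
  "mmult N A B = (\<lambda>a b. \<Sum>c\<in>{1..N}. A a c * B c b)"

definition adj :: "(nat \<Rightarrow> nat \<Rightarrow> complex) \<Rightarrow> nat \<Rightarrow> nat \<Rightarrow> complex" where
  "adj A = (\<lambda>a b. cnj (A b a))"

definition Vmat :: "nat \<Rightarrow> nat \<Rightarrow> nat \<Rightarrow> complex" where
  "Vmat N = (\<lambda>m n. complex_of_real (1 / sqrt (real N)) *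
      exp (- 2 * pi * \<i> * of_real (real m * real n / real N)))"

definition Vhat :: "nat \<Rightarrow> nat \<Rightarrow> nat \<Rightarrow> complex" where
  "Vhat N = (\<lambda>m n. complex_of_real (1 / sqrt (real N)) *
      exp (- 2 * pi * \<i> * of_real (real n * (real m / real N + 1 / (2 * real N)))))"

definition Cmat :: "nat \<Rightarrow> nat \<Rightarrow> nat \<Rightarrow> nat \<Rightarrow> complex" where
  "Cmat N m = (\<lambda>a b. if a = m \<and> b = m
      then complex_of_real (sqrt (1 + 1/2 * cos (2 * pi * real m / real N))) else 0)"

definition Chat :: "nat \<Rightarrow> nat \<Rightarrow> nat \<Rightarrow> nat \<Rightarrow> complex" where
  "Chat N m = (\<lambda>a b. if a = m \<and> b = m
      then complex_of_real (sqrt (1 + 1/2 * cos (2 * pi * (real m / real N + 1 / (2 * real N))))) else 0)"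

definition Qmat :: "nat \<Rightarrow> nat \<Rightarrow> nat \<Rightarrow> nat \<Rightarrow> complex" where
  "Qmat N m = mmult N (adj (Vmat N)) (mmult N (Cmat N m) (Vmat N))"

definition Qhat :: "nat \<Rightarrow> nat \<Rightarrow> nat \<Rightarrow> nat \<Rightarrow> complex" where
  "Qhat N m = mmult N (adj (Vhat N)) (mmult N (Chat N m) (Vhat N))"

definition qform :: "nat \<Rightarrow> (nat \<Rightarrow> nat \<Rightarrow> complex) \<Rightarrow> (nat \<Rightarrow> complex) \<Rightarrow> complex" where
  "qform N A x = (\<Sum>a\<in>{1..N}. \<Sum>b\<in>{1..N}. cnj (x a) * A a b * x b)"

definition sqnorm :: "nat \<Rightarrow> (nat \<Rightarrow> complex) \<Rightarrow> real" where
  "sqnorm N x = (\<Sum>a\<in>{1..N}. (cmod (x a))\<^sup>2)"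

text \<open>S_m^{i,k} for sequences x = s_i and y = s_k.\<close>
definition Sterm :: "nat \<Rightarrow> nat \<Rightarrow> (nat \<Rightarrow> complex) \<Rightarrow> (nat \<Rightarrow> complex) \<Rightarrow> complex" where
  "Sterm N m x y = qform N (Qmat N m) x * qform N (Qmat N m) y
                 + qform N (Qhat N m) x * qform N (Qhat N m) y"

text \<open>SINR of user i; s k is the spreading sequence of user k. The bracketed quantity
  is real (quadratic forms of Hermitian matrices); we take its real part.\<close>
definition SINR :: "nat \<Rightarrow> nat \<Rightarrow> real \<Rightarrow> real \<Rightarrow> real \<Rightarrow> (nat \<Rightarrow> nat \<Rightarrow> complex) \<Rightarrow> nat \<Rightarrow> real" where
  "SINR N K N0 P T s i =
     (Re (\<Sum>k\<in>{1..K} - {i}. \<Sum>m\<in>{1..N}. Sterm N m (s i) (s k)) / (6 * (real N)\<^sup>2)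
      + N0 / (2 * P * T)) powr (-1/2)"

definition Sigma :: "nat \<Rightarrow> nat \<Rightarrow> (nat \<Rightarrow> nat \<Rightarrow> complex) \<Rightarrow> nat \<Rightarrow> nat \<Rightarrow> nat \<Rightarrow> complex" where
  "Sigma N K s i = (\<lambda>a b. \<Sum>k\<in>{1..K} - {i}. \<Sum>m\<in>{1..N}.
      qform N (Qmat N m) (s k) * Qmat N m a b + qform N (Qhat N m) (s k) * Qhat N m a b)"

definition is_eigvec :: "nat \<Rightarrow> (nat \<Rightarrow> nat \<Rightarrow> complex) \<Rightarrow> (nat \<Rightarrow> complex) \<Rightarrow> complex \<Rightarrow> bool" where
  "is_eigvec N A v \<mu> \<longleftrightarrow> (\<exists>a\<in>{1..N}. v a \<noteq> 0) \<and>
      (\<forall>a\<in>{1..N}. (\<Sum>b\<in>{1..N}. A a b * v b) = \<mu> * v a)"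

definition is_eigval :: "nat \<Rightarrow> (nat \<Rightarrow> nat \<Rightarrow> complex) \<Rightarrow> complex \<Rightarrow> bool" where
  "is_eigval N A \<mu> \<longleftrightarrow> (\<exists>v. is_eigvec N A v \<mu>)"

text \<open>Minimum eigenvalue of a Hermitian matrix (all eigenvalues are real).\<close>
definition is_min_eigval :: "nat \<Rightarrow> (nat \<Rightarrow> nat \<Rightarrow> complex) \<Rightarrow> real \<Rightarrow> bool" where
  "is_min_eigval N A lam \<longleftrightarrow> is_eigval N A (complex_of_real lam) \<and>
      (\<forall>\<mu>. is_eigval N A \<mu> \<longrightarrow> lam \<le> Re \<mu>)"

end

theory Submission
  imports Defs "HOL-Analysis.Analysis"
begin

text \<open>
  With \<open>\<Sigma> = Sigma N K s i\<close>, the bracket in \<open>SINR\<close> is \<open>x\<^sup>* \<Sigma> x / (6 N\<^sup>2) + N0 / (2 P T)\<close>,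
  and \<open>\<Sigma>\<close> is positive semidefinite, being a nonnegative combination of the matrices
  \<open>Q\<^sub>m = V\<^sup>* C\<^sub>m V\<close> and \<open>Q\<^sub>m'\<close> with \<open>C\<^sub>m\<close> a nonnegative diagonal matrix. As \<open>t \<mapsto> t powr (-1/2)\<close>
  is decreasing, maximising the SINR on the sphere \<open>\<parallel>x\<parallel>\<^sup>2 = N\<close> means minimising the Rayleigh
  quotient of \<open>\<Sigma>\<close>. A minimiser of \<open>x\<^sup>* \<Sigma> x\<close> on the compact unit sphere, with minimum \<open>\<mu>\<close>, is an
  eigenvector for \<open>\<mu>\<close>, so \<open>\<lambda>\<^sub>m\<^sub>i\<^sub>n \<le> \<mu>\<close> and \<open>\<lambda>\<^sub>m\<^sub>i\<^sub>n \<parallel>x\<parallel>\<^sup>2 \<le> x\<^sup>* \<Sigma> x\<close> for all \<open>x\<close>, with equality at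
  \<open>x = \<surd>N u\<close>.
\<close>

definition mat_vec :: "nat \<Rightarrow> (nat \<Rightarrow> nat \<Rightarrow> complex) \<Rightarrow> (nat \<Rightarrow> complex) \<Rightarrow> nat \<Rightarrow> complex" where
  "mat_vec N A x = (\<lambda>a. \<Sum>b\<in>{1..N}. A a b * x b)"

definition cinner :: "nat \<Rightarrow> (nat \<Rightarrow> complex) \<Rightarrow> (nat \<Rightarrow> complex) \<Rightarrow> complex" where
  "cinner N x y = (\<Sum>a\<in>{1..N}. cnj (x a) * y a)"

definition hermitian :: "nat \<Rightarrow> (nat \<Rightarrow> nat \<Rightarrow> complex) \<Rightarrow> bool" where
  "hermitian N A \<longleftrightarrow> (\<forall>a\<in>{1..N}. \<forall>b\<in>{1..N}. A a b = cnj (A b a))"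

definition pos_semidef :: "nat \<Rightarrow> (nat \<Rightarrow> nat \<Rightarrow> complex) \<Rightarrow> bool" where
  "pos_semidef N A \<longleftrightarrow> hermitian N A \<and> (\<forall>x. 0 \<le> Re (qform N A x))"

lemma cnj_mult_self: "cnj z * z = complex_of_real ((cmod z)\<^sup>2)"
  using complex_norm_square[of z] by (simp add: mult.commute)

lemma cinner_self: "cinner N x x = complex_of_real (sqnorm N x)"
  by (simp add: cinner_def sqnorm_def cnj_mult_self)

lemma sqnorm_nonneg: "0 \<le> sqnorm N x"
  by (simp add: sqnorm_def sum_nonneg)

lemma sqnorm_eq_0_iff: "sqnorm N x = 0 \<longleftrightarrow> (\<forall>a\<in>{1..N}. x a = 0)"
  by (simp add: sqnorm_def sum_nonneg_eq_0_iff)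

lemma sqnorm_scale: "sqnorm N (\<lambda>a. c * x a) = (cmod c)\<^sup>2 * sqnorm N x"
  by (simp add: sqnorm_def norm_mult power_mult_distrib sum_distrib_left)

lemma qform_eq_cinner: "qform N A x = cinner N x (mat_vec N A x)"
  by (simp add: qform_def cinner_def mat_vec_def sum_distrib_left mult.assoc)

lemma qform_scale: "qform N A (\<lambda>a. c * x a) = cnj c * c * qform N A x"
  by (simp add: qform_def sum_distrib_left mult_ac)

lemma qform_add_scaled:
  "qform N A (\<lambda>a. x a + c * w a) = qform N A x + c * cinner N x (mat_vec N A w)
     + cnj c * cinner N w (mat_vec N A x) + cnj c * c * qform N A w"
proof -
  have "cnj (x a + c * w a) * A a b * (x b + c * w b)
      = cnj (x a) * A a b * x b + c * (cnj (x a) * (A a b * w b))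
        + cnj c * (cnj (w a) * (A a b * x b)) + cnj c * c * (cnj (w a) * A a b * w b)" for a b
    by (simp add: algebra_simps)
  then show ?thesis
    unfolding qform_def cinner_def mat_vec_def by (simp only: sum.distrib sum_distrib_left)
qed

lemma qform_add: "qform N (\<lambda>a b. A a b + B a b) x = qform N A x + qform N B x"
  by (simp add: qform_def algebra_simps sum.distrib)

lemma qform_scale_matrix: "qform N (\<lambda>a b. c * A a b) x = c * qform N A x"
  by (simp add: qform_def sum_distrib_left mult_ac)

lemma qform_sum: "qform N (\<lambda>a b. \<Sum>k\<in>S. F k a b) x = (\<Sum>k\<in>S. qform N (F k) x)"
proof -
  have "qform N (\<lambda>a b. \<Sum>k\<in>S. F k a b) x
      = (\<Sum>a\<in>{1..N}. \<Sum>b\<in>{1..N}. \<Sum>k\<in>S. cnj (x a) * F k a b * x b)"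
    by (simp add: qform_def sum_distrib_left sum_distrib_right)
  also have "\<dots> = (\<Sum>k\<in>S. qform N (F k) x)"
    unfolding qform_def by (simp add: sum.swap[of _ S])
  finally show ?thesis .
qed

lemma mat_vec_mmult: "mat_vec N (mmult N A B) x = mat_vec N A (mat_vec N B x)"
proof
  fix a
  have "mat_vec N (mmult N A B) x a = (\<Sum>b\<in>{1..N}. \<Sum>c\<in>{1..N}. A a c * (B c b * x b))"
    by (simp add: mat_vec_def mmult_def sum_distrib_right mult.assoc)
  also have "\<dots> = (\<Sum>c\<in>{1..N}. \<Sum>b\<in>{1..N}. A a c * (B c b * x b))"
    by (rule sum.swap)
  also have "\<dots> = mat_vec N A (mat_vec N B x) a"
    by (simp add: mat_vec_def sum_distrib_left)
  finally show "mat_vec N (mmult N A B) x a = mat_vec N A (mat_vec N B x) a" .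
qed

lemma cinner_mat_vec_adj: "cinner N x (mat_vec N (adj W) y) = cinner N (mat_vec N W x) y"
proof -
  have "cinner N x (mat_vec N (adj W) y) = (\<Sum>a\<in>{1..N}. \<Sum>c\<in>{1..N}. cnj (W c a * x a) * y c)"
    by (simp add: cinner_def mat_vec_def adj_def sum_distrib_left mult_ac)
  also have "\<dots> = (\<Sum>c\<in>{1..N}. \<Sum>a\<in>{1..N}. cnj (W c a * x a) * y c)"
    by (rule sum.swap)
  also have "\<dots> = cinner N (mat_vec N W x) y"
    by (simp add: cinner_def mat_vec_def sum_distrib_right)
  finally show ?thesis .
qed

lemma qform_congruence: "qform N (mmult N (adj W) (mmult N D W)) x = qform N D (mat_vec N W x)"
  by (simp only: qform_eq_cinner mat_vec_mmult cinner_mat_vec_adj)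

lemma hermitian_cnj: "hermitian N A \<Longrightarrow> a \<in> {1..N} \<Longrightarrow> b \<in> {1..N} \<Longrightarrow> cnj (A a b) = A b a"
  unfolding hermitian_def by (metis complex_cnj_cnj)

lemma cinner_mat_vec_hermitian:
  assumes "hermitian N A"
  shows "cinner N x (mat_vec N A y) = cnj (cinner N y (mat_vec N A x))"
proof -
  have "cnj (cinner N y (mat_vec N A x)) = (\<Sum>a\<in>{1..N}. \<Sum>b\<in>{1..N}. cnj (x b) * A b a * y a)"
    unfolding cinner_def mat_vec_def cnj_sum sum_distrib_left
    by (intro sum.cong refl) (simp add: hermitian_cnj[OF assms] mult_ac)
  also have "\<dots> = cinner N x (mat_vec N A y)"
    unfolding cinner_def mat_vec_def by (subst sum.swap) (simp add: sum_distrib_left mult_ac)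
  finally show ?thesis by simp
qed

lemma qform_hermitian_real: "hermitian N A \<Longrightarrow> Im (qform N A x) = 0"
  using cinner_mat_vec_hermitian[of N A x x] unfolding qform_eq_cinner
  by (metis cnj.sel(2) equal_neg_zero)

lemma hermitian_add: "hermitian N A \<Longrightarrow> hermitian N B \<Longrightarrow> hermitian N (\<lambda>a b. A a b + B a b)"
  unfolding hermitian_def by (metis complex_cnj_add)

lemma hermitian_scale: "cnj c = c \<Longrightarrow> hermitian N A \<Longrightarrow> hermitian N (\<lambda>a b. c * A a b)"
  unfolding hermitian_def by (metis complex_cnj_mult)

lemma hermitian_sum:
  "(\<And>k. k \<in> S \<Longrightarrow> hermitian N (F k)) \<Longrightarrow> hermitian N (\<lambda>a b. \<Sum>k\<in>S. F k a b)"
  unfolding hermitian_def cnj_sum by (intro ballI sum.cong refl) blast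

lemma hermitian_congruence:
  assumes "hermitian N D" shows "hermitian N (mmult N (adj W) (mmult N D W))"
  unfolding hermitian_def mmult_def adj_def
proof (intro ballI)
  fix a b assume "a \<in> {1..N}" "b \<in> {1..N}"
  have "cnj (\<Sum>c\<in>{1..N}. cnj (W c b) * (\<Sum>d\<in>{1..N}. D c d * W d a))
      = (\<Sum>c\<in>{1..N}. \<Sum>d\<in>{1..N}. W c b * D d c * cnj (W d a))"
    unfolding cnj_sum sum_distrib_left
    by (intro sum.cong refl) (simp add: hermitian_cnj[OF assms] mult_ac)
  also have "\<dots> = (\<Sum>c\<in>{1..N}. cnj (W c a) * (\<Sum>d\<in>{1..N}. D c d * W d b))"
    by (subst sum.swap) (simp add: sum_distrib_left mult_ac)
  finally show "(\<Sum>c\<in>{1..N}. cnj (W c a) * (\<Sum>d\<in>{1..N}. D c d * W d b))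
      = cnj (\<Sum>c\<in>{1..N}. cnj (W c b) * (\<Sum>d\<in>{1..N}. D c d * W d a))" by simp
qed

lemma pos_semidef_qform_real: "pos_semidef N A \<Longrightarrow> Im (qform N A x) = 0"
  by (simp add: pos_semidef_def qform_hermitian_real)

lemma pos_semidef_qform_nonneg: "pos_semidef N A \<Longrightarrow> 0 \<le> Re (qform N A x)"
  by (simp add: pos_semidef_def)

lemma pos_semidef_add:
  "pos_semidef N A \<Longrightarrow> pos_semidef N B \<Longrightarrow> pos_semidef N (\<lambda>a b. A a b + B a b)"
  unfolding pos_semidef_def qform_add by (simp add: hermitian_add)

lemma pos_semidef_scale:
  assumes "Im c = 0" and "0 \<le> Re c" and "pos_semidef N A"
  shows "pos_semidef N (\<lambda>a b. c * A a b)"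
proof -
  have "cnj c = c" using assms(1) by (simp add: complex_eq_iff)
  moreover have "Im (qform N A x) = 0" for x
    using assms(3) by (simp add: pos_semidef_def qform_hermitian_real)
  ultimately show ?thesis
    using assms unfolding pos_semidef_def qform_scale_matrix by (simp add: hermitian_scale)
qed

lemma pos_semidef_sum:
  "(\<And>k. k \<in> S \<Longrightarrow> pos_semidef N (F k)) \<Longrightarrow> pos_semidef N (\<lambda>a b. \<Sum>k\<in>S. F k a b)"
  unfolding pos_semidef_def qform_sum Re_sum by (simp add: hermitian_sum sum_nonneg)

lemma pos_semidef_congruence:
  "pos_semidef N D \<Longrightarrow> pos_semidef N (mmult N (adj W) (mmult N D W))"
  by (simp add: pos_semidef_def hermitian_congruence qform_congruence)

lemma pos_semidef_single_entry:
  assumes "0 \<le> r"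
  shows "pos_semidef N (\<lambda>a b. if a = m \<and> b = m then complex_of_real r else 0)"
  unfolding pos_semidef_def
proof
  show "hermitian N (\<lambda>a b. if a = m \<and> b = m then complex_of_real r else 0)"
    by (simp add: hermitian_def)
  show "\<forall>x. 0 \<le> Re (qform N (\<lambda>a b. if a = m \<and> b = m then complex_of_real r else 0) x)"
  proof
    fix x
    have "cnj (x a) * (if a = m \<and> b = m then complex_of_real r else 0) * x b
        = (if b = m then if a = m then r * (cnj (x m) * x m) else 0 else 0)" for a b
      by simp
    then have "qform N (\<lambda>a b. if a = m \<and> b = m then complex_of_real r else 0) x
        = (if m \<in> {1..N} then complex_of_real (r * (cmod (x m))\<^sup>2) else 0)"
      unfolding qform_def by (auto simp: cnj_mult_self)
    then show "0 \<le> Re (qform N (\<lambda>a b. if a = m \<and> b = m then complex_of_real r else 0) x)"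
      using assms by simp
  qed
qed

lemma linear_coeff_zero_if_quadratic_nonneg:
  fixes b c :: real
  assumes "\<And>t. 0 \<le> b * t + c * t\<^sup>2"
  shows "b = 0"
proof (rule ccontr)
  assume "b \<noteq> 0"
  define d where "d = \<bar>c\<bar> + 1"
  have d: "0 < d" "c - d < 0" unfolding d_def by auto
  have "0 \<le> b * (- b / d) + c * (- b / d)\<^sup>2" by (rule assms)
  also have "\<dots> = b\<^sup>2 * (c - d) / d\<^sup>2"
    using d by (simp add: field_simps power2_eq_square)
  also have "\<dots> < 0"
    using d \<open>b \<noteq> 0\<close> by (simp add: divide_neg_pos mult_pos_neg)
  finally show False by simp
qed

lemma pos_semidef_kernel:
  assumes "pos_semidef N A" and "Re (qform N A x) = 0" and "a \<in> {1..N}"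
  shows "mat_vec N A x a = 0"
proof -
  \<comment> \<open>\<open>0 \<le> q(x + t A x) = 2 t \<parallel>A x\<parallel>\<^sup>2 + t\<^sup>2 q(A x)\<close> for all real \<open>t\<close> forces \<open>A x = 0\<close>.\<close>
  define w where "w = mat_vec N A x"
  have herm: "hermitian N A" using assms(1) by (simp add: pos_semidef_def)
  have "Re (cinner N x (mat_vec N A w)) = sqnorm N w"
    using cinner_mat_vec_hermitian[OF herm, of x w] by (simp add: w_def cinner_self)
  then have "0 \<le> 2 * sqnorm N w * t + Re (qform N A w) * t\<^sup>2" for t
    using pos_semidef_qform_nonneg[OF assms(1), of "\<lambda>a. x a + complex_of_real t * w a"] assms(2)
    by (simp add: qform_add_scaled w_def cinner_self power2_eq_square mult_ac)
  then have "2 * sqnorm N w = 0" by (rule linear_coeff_zero_if_quadratic_nonneg)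
  then show ?thesis using assms(3) by (simp add: sqnorm_eq_0_iff w_def)
qed

lemma qform_eigvec: "is_eigvec N A u \<mu> \<Longrightarrow> qform N A u = \<mu> * complex_of_real (sqnorm N u)"
  unfolding qform_eq_cinner cinner_self[symmetric] is_eigvec_def cinner_def mat_vec_def
  by (simp add: sum_distrib_left mult_ac)

lemma pos_semidef_eigval_nonneg:
  assumes "pos_semidef N A" and "is_eigvec N A u (complex_of_real \<mu>)"
  shows "0 \<le> \<mu>"
proof -
  have "sqnorm N u \<noteq> 0" using assms(2) by (auto simp: is_eigvec_def sqnorm_eq_0_iff)
  then have "0 < sqnorm N u" using sqnorm_nonneg[of N u] by linarith
  moreover have "0 \<le> \<mu> * sqnorm N u"
    using pos_semidef_qform_nonneg[OF assms(1), of u] by (simp add: qform_eigvec[OF assms(2)])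
  ultimately show ?thesis by (simp add: zero_le_mult_iff)
qed

lemma qform_attains_min_on_unit_sphere:
  assumes "1 \<le> N"
  obtains x0 where "sqnorm N x0 = 1"
    and "\<And>y. sqnorm N y = 1 \<Longrightarrow> Re (qform N A x0) \<le> Re (qform N A y)"
proof -
  define B where "B a = (if a \<in> {1..N} then cball (0::complex) 1 else {0})" for a
  define S where "S = Pi UNIV B \<inter> {x. sqnorm N x = 1}"
  have coord: "continuous_on X (\<lambda>x::nat \<Rightarrow> complex. x a)" for X a
    by (rule continuous_on_subset[OF continuous_on_product_coordinates]) simp
  have "compactin (product_topology (\<lambda>_. euclidean) UNIV) (PiE UNIV B)"
    by (subst compactin_PiE) (auto simp: B_def)
  then have "compact (Pi UNIV B)"
    by (simp add: euclidean_product_topology PiE_UNIV_domain)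
  moreover have "closed {x. sqnorm N x = 1}"
    unfolding sqnorm_def by (intro closed_Collect_eq continuous_intros coord)
  ultimately have compact: "compact S" unfolding S_def by (rule compact_Int_closed)
  have nonempty: "S \<noteq> {}"
  proof -
    define e :: "nat \<Rightarrow> complex" where "e a = (if a = 1 then 1 else 0)" for a
    have "sqnorm N e = (\<Sum>a\<in>{1..N}. if a = 1 then 1 else 0)"
      unfolding sqnorm_def e_def by (intro sum.cong) auto
    then have "e \<in> S" using assms by (simp add: S_def B_def e_def)
    then show ?thesis by blast
  qed
  have "continuous_on S (\<lambda>x. Re (qform N A x))"
    unfolding qform_def by (intro continuous_intros coord)
  with compact nonempty obtain x0
    where x0: "x0 \<in> S" and min: "\<And>y. y \<in> S \<Longrightarrow> Re (qform N A x0) \<le> Re (qform N A y)"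
    by (metis continuous_attains_inf)
  show thesis
  proof
    show "sqnorm N x0 = 1" using x0 by (simp add: S_def)
  next
    fix y assume y: "sqnorm N y = 1"
    define y' where "y' a = (if a \<in> {1..N} then y a else 0)" for a
    have "sqnorm N y' = sqnorm N y" "qform N A y' = qform N A y"
      by (simp_all add: sqnorm_def qform_def y'_def)
    moreover have "(cmod (y a))\<^sup>2 \<le> 1" if "a \<in> {1..N}" for a
      using member_le_sum[of a "{1..N}" "\<lambda>a. (cmod (y a))\<^sup>2"] that y by (simp add: sqnorm_def)
    then have "y' \<in> Pi UNIV B"
      by (auto simp: y'_def B_def power_le_one_iff)
    ultimately show "Re (qform N A x0) \<le> Re (qform N A y)"
      using min[of y'] y by (simp add: S_def)
  qed
qed

lemma qform_lower_bound_from_unit_sphere: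
  assumes "\<And>y. sqnorm N y = 1 \<Longrightarrow> \<mu> \<le> Re (qform N A y)"
  shows "\<mu> * sqnorm N y \<le> Re (qform N A y)"
proof (cases "sqnorm N y = 0")
  case True
  then have "qform N A y = 0" by (simp add: sqnorm_eq_0_iff qform_def)
  with True show ?thesis by simp
next
  case False
  define r where "r = sqnorm N y"
  have r: "0 < r" using False sqnorm_nonneg[of N y] by (simp add: r_def)
  define c where "c = complex_of_real (1 / sqrt r)"
  have c: "(cmod c)\<^sup>2 = 1 / r" using r by (simp add: c_def norm_divide power_divide)
  then have "sqnorm N (\<lambda>a. c * y a) = 1" using r by (simp add: sqnorm_scale r_def)
  then have "\<mu> \<le> Re (qform N A (\<lambda>a. c * y a))" by (rule assms)
  also have "\<dots> = Re (qform N A y) / r" by (simp add: qform_scale cnj_mult_self c)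
  finally show ?thesis using r by (simp add: r_def field_simps)
qed

lemma hermitian_has_rayleigh_eigvec:
  assumes "hermitian N A" and "1 \<le> N"
  obtains \<mu> x where "is_eigvec N A x (complex_of_real \<mu>)"
    and "\<And>y. \<mu> * sqnorm N y \<le> Re (qform N A y)"
proof -
  obtain x where x: "sqnorm N x = 1"
    and min: "\<And>y. sqnorm N y = 1 \<Longrightarrow> Re (qform N A x) \<le> Re (qform N A y)"
    using qform_attains_min_on_unit_sphere[OF assms(2)] by blast
  define \<mu> where "\<mu> = Re (qform N A x)"
  have bound: "\<mu> * sqnorm N y \<le> Re (qform N A y)" for y
    unfolding \<mu>_def using min by (rule qform_lower_bound_from_unit_sphere)
  \<comment> \<open>The minimiser \<open>x\<close> lies in the kernel of the positive semidefinite \<open>A - \<mu> I\<close>.\<close>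
  define B where "B a b = A a b + (- complex_of_real \<mu>) * (if a = b then 1 else 0)" for a b
  have qform_B: "Re (qform N B y) = Re (qform N A y) - \<mu> * sqnorm N y" for y
  proof -
    have "qform N (\<lambda>a b. if a = b then 1 else 0) y
        = (\<Sum>a\<in>{1..N}. \<Sum>b\<in>{1..N}. if b = a then cnj (y a) * y a else 0)"
      unfolding qform_def by (intro sum.cong refl) auto
    also have "\<dots> = cinner N y y" by (simp add: cinner_def)
    finally have "qform N (\<lambda>a b. if a = b then 1 else 0) y = cinner N y y" .
    then show ?thesis unfolding B_def qform_add qform_scale_matrix by (simp add: cinner_self)
  qed
  have "hermitian N B"
    unfolding B_def by (intro hermitian_add hermitian_scale assms(1)) (simp_all add: hermitian_def)
  then have "pos_semidef N B" using bound by (simp add: pos_semidef_def qform_B)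
  moreover have "Re (qform N B x) = 0" by (simp add: qform_B x \<mu>_def)
  ultimately have "mat_vec N B x a = 0" if "a \<in> {1..N}" for a
    using that by (rule pos_semidef_kernel)
  moreover have "mat_vec N B x a = mat_vec N A x a - complex_of_real \<mu> * x a" if "a \<in> {1..N}" for a
  proof -
    have "mat_vec N B x a
        = mat_vec N A x a + (\<Sum>b\<in>{1..N}. if b = a then - complex_of_real \<mu> * x b else 0)"
      unfolding mat_vec_def B_def sum.distrib[symmetric] by (intro sum.cong refl) (auto simp: algebra_simps)
    then show ?thesis using that by simp
  qed
  moreover have "\<exists>a\<in>{1..N}. x a \<noteq> 0" using x sqnorm_eq_0_iff[of N x] by auto
  ultimately have "is_eigvec N A x (complex_of_real \<mu>)"
    by (simp add: is_eigvec_def mat_vec_def)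
  then show thesis using that bound by blast
qed

lemma min_eigval_le_rayleigh:
  assumes "hermitian N A" and "1 \<le> N" and "is_min_eigval N A lam"
  shows "lam * sqnorm N y \<le> Re (qform N A y)"
proof -
  obtain \<mu> x where "is_eigvec N A x (complex_of_real \<mu>)"
    and bound: "\<And>y. \<mu> * sqnorm N y \<le> Re (qform N A y)"
    using hermitian_has_rayleigh_eigvec[OF assms(1,2)] by blast
  then have "lam \<le> \<mu>"
    using assms(3) unfolding is_min_eigval_def is_eigval_def by (metis Re_complex_of_real)
  then have "lam * sqnorm N y \<le> \<mu> * sqnorm N y" by (simp add: mult_right_mono sqnorm_nonneg)
  also have "\<dots> \<le> Re (qform N A y)" by (rule bound)
  finally show ?thesis .
qed

lemma one_plus_half_cos_nonneg: "0 \<le> 1 + 1/2 * cos (x::real)"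
  using cos_ge_minus_one[of x] by linarith

lemma Qmat_pos_semidef: "pos_semidef N (Qmat N m)"
  unfolding Qmat_def Cmat_def
  by (intro pos_semidef_congruence pos_semidef_single_entry real_sqrt_ge_zero one_plus_half_cos_nonneg)

lemma Qhat_pos_semidef: "pos_semidef N (Qhat N m)"
  unfolding Qhat_def Chat_def
  by (intro pos_semidef_congruence pos_semidef_single_entry real_sqrt_ge_zero one_plus_half_cos_nonneg)

lemma Sigma_pos_semidef: "pos_semidef N (Sigma N K s i)"
  unfolding Sigma_def
  by (intro pos_semidef_sum pos_semidef_add pos_semidef_scale Qmat_pos_semidef Qhat_pos_semidef
      pos_semidef_qform_real pos_semidef_qform_nonneg)

lemma qform_Sigma:
  "qform N (Sigma N K s i) x = (\<Sum>k\<in>{1..K} - {i}. \<Sum>m\<in>{1..N}. Sterm N m x (s k))"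
  unfolding Sigma_def qform_sum qform_add qform_scale_matrix Sterm_def by (simp add: mult.commute)

lemma SINR_update:
  "SINR N K N0 P T (s(i := x)) i
     = (Re (qform N (Sigma N K s i) x) / (6 * (real N)\<^sup>2) + N0 / (2 * P * T)) powr (-1/2)"
proof -
  have "(\<Sum>k\<in>{1..K} - {i}. \<Sum>m\<in>{1..N}. Sterm N m x ((s(i := x)) k))
      = (\<Sum>k\<in>{1..K} - {i}. \<Sum>m\<in>{1..N}. Sterm N m x (s k))"
    by (intro sum.cong refl) auto
  then show ?thesis unfolding SINR_def qform_Sigma by simp
qed

theorem mainTheorem1:
  fixes N K i :: nat and N0 P T lam :: real
    and s :: "nat \<Rightarrow> nat \<Rightarrow> complex" and u :: "nat \<Rightarrow> complex"
  assumes "N \<ge> 2" and "K \<ge> 2" and "N0 > 0" and "P > 0" and "T > 0"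
    and "i \<in> {1..K}"
    and "is_min_eigval N (Sigma N K s i) lam"
    and "is_eigvec N (Sigma N K s i) u (complex_of_real lam)"
    and "sqnorm N u = 1"
  shows "(\<forall>x. sqnorm N x = real N \<longrightarrow>
            SINR N K N0 P T (s(i := x)) i
              \<le> SINR N K N0 P T (s(i := (\<lambda>a. complex_of_real (sqrt (real N)) * u a))) i)
       \<and> SINR N K N0 P T (s(i := (\<lambda>a. complex_of_real (sqrt (real N)) * u a))) i
           = (lam / (6 * real N) + N0 / (2 * P * T)) powr (-1/2)"
proof -
  define \<Sigma> where "\<Sigma> = Sigma N K s i"
  define v where "v = (\<lambda>a. complex_of_real (sqrt (real N)) * u a)"
  define c where "c = N0 / (2 * P * T)"
  have N: "0 < real N" using assms(1) by simp
  have psd: "pos_semidef N \<Sigma>" unfolding \<Sigma>_def by (rule Sigma_pos_semidef)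
  have eigvec: "is_eigvec N \<Sigma> u (complex_of_real lam)" using assms(8) by (simp add: \<Sigma>_def)
  have pos: "0 < lam / (6 * real N) + c"
    using pos_semidef_eigval_nonneg[OF psd eigvec] N assms(3-5) by (simp add: c_def add_nonneg_pos)
  have "Re (qform N \<Sigma> v) = real N * lam"
    using N assms(9) by (simp add: v_def qform_scale cnj_mult_self qform_eigvec[OF eigvec])
  then have SINR_v: "SINR N K N0 P T (s(i := v)) i = (lam / (6 * real N) + c) powr (-1/2)"
    using N by (simp add: SINR_update \<Sigma>_def c_def power2_eq_square)
  have "SINR N K N0 P T (s(i := x)) i \<le> SINR N K N0 P T (s(i := v)) i" if "sqnorm N x = real N" for x
  proof -
    have "lam * real N \<le> Re (qform N \<Sigma> x)"
      using min_eigval_le_rayleigh[of N \<Sigma> lam x] psd assms(1,7) that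
      by (simp add: pos_semidef_def \<Sigma>_def)
    then have "lam / (6 * real N) \<le> Re (qform N \<Sigma> x) / (6 * (real N)\<^sup>2)"
      using N by (simp add: field_simps power2_eq_square)
    then show ?thesis
      unfolding SINR_v SINR_update[where x = x] \<Sigma>_def[symmetric] c_def[symmetric]
      by (intro powr_mono2' pos) simp_all
  qed
  with SINR_v show ?thesis by (simp add: v_def c_def)
qed

end
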